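(* Let $\alpha,\beta,\gamma\in\mathbb{Z}[i]$ satisfy $\alpha^2+\beta^2+\gamma^2=0$, $\alpha\beta\gamma\neq0$ and $\gcd(\alpha,\beta,\gamma)\in U$. Then $\alpha\beta\gamma\equiv0\pmod{(1+i)^2}$.
   Context: $\mathbb{Z}[i]$ is the ring of Gaussian integers, $U=\{1,-1,i,-i\}$ its unit group; $\gcd(\alpha,\beta,\gamma)\in U$ means the three have no common non-unit divisor. *)

theory Defs
  imports Complex_Main
begin

definition gauss_ints :: "complex set" where
  "gauss_ints = {z. Re z \<in> \<int> \<and> Im z \<in> \<int>}"

definition gdvd :: "complex \<Rightarrow> complex \<Rightarrow> bool" where
  "gdvd a b \<longleftrightarrow> (\<exists>k\<in>gauss_ints. b = a * k)"

definition gunits :: "complex set" where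
  "gunits = {1, -1, \<i>, -\<i>}"

text \<open>gcd(a,b,c) in U: every common divisor in Z[i] is a unit.\<close>
definition gcoprime3 :: "complex \<Rightarrow> complex \<Rightarrow> complex \<Rightarrow> bool" where
  "gcoprime3 a b c \<longleftrightarrow>
     (\<forall>d\<in>gauss_ints. gdvd d a \<and> gdvd d b \<and> gdvd d c \<longrightarrow> d \<in> gunits)"

end

theory Submission
  imports Defs
begin

text \<open>
  Write a Gaussian integer as \<open>a + b\<i>\<close>; then \<open>1 + \<i>\<close> divides it iff \<open>a + b\<close> is even,
  which is also the parity of \<open>Re (z\<^sup>2) = a\<^sup>2 - b\<^sup>2\<close>. Taking real parts of
  \<open>\<alpha>\<^sup>2 + \<beta>\<^sup>2 + \<gamma>\<^sup>2 = 0\<close>, an even number of \<alpha>, \<beta>, \<gamma> are prime to \<open>1 + \<i>\<close>, and by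
  coprimality exactly two are, say \<alpha> and \<beta>. Halving the imaginary parts gives
  \<open>ab + cd + ef = 0\<close>, where \<open>ab\<close> and \<open>cd\<close> are even because \<open>a + b\<close> and \<open>c + d\<close> are odd.
  So \<open>ef\<close> is even, which together with \<open>e + f\<close> even makes \<open>e\<close> and \<open>f\<close> even: \<open>2\<close> divides
  \<open>\<gamma>\<close>, and \<open>2 = -\<i> (1 + \<i>)\<^sup>2\<close>.
\<close>

lemma even_diff_squares_iff: "even ((a::int)^2 - b^2) \<longleftrightarrow> even (a + b)"
  by (simp add: power2_eq_square)

lemma even_both_if_even_sum_mult:
  fixes a b c d e f :: int
  assumes "even (a + b + (c + d) + (e + f))" and "a * b + c * d + e * f = 0"
    and "odd (a + b)" and "odd (c + d)"
  shows "even e \<and> even f"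
proof -
  have "even (a * b)" "even (c * d)" using assms(3,4) by auto
  then have "even (e * f)" using assms(2) by (metis add.commute dvd_0_right even_add)
  moreover have "even (e + f)" using assms(1,3,4) by auto
  ultimately show ?thesis by auto
qed

lemma even_pair_if_sum_squares_zero:
  fixes a b c d e f :: int
  assumes re: "a^2 - b^2 + (c^2 - d^2) + (e^2 - f^2) = 0" and im: "a * b + c * d + e * f = 0"
    and not_all_even: "odd (a + b) \<or> odd (c + d) \<or> odd (e + f)"
  shows "(even a \<and> even b) \<or> (even c \<and> even d) \<or> (even e \<and> even f)"
proof -
  have sum: "even (a + b + (c + d) + (e + f))"
    using arg_cong[OF re, of even] by (simp only: even_add even_diff_squares_iff) simp
  consider "odd (a + b)" "odd (c + d)" | "odd (a + b)" "odd (e + f)" | "odd (c + d)" "odd (e + f)"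
    using sum not_all_even by auto
  then show ?thesis
  proof cases
    case 1
    then show ?thesis using even_both_if_even_sum_mult[OF sum im] by blast
  next
    case 2
    have "even (a + b + (e + f) + (c + d))" "a * b + e * f + c * d = 0"
      using sum im by (simp_all add: ac_simps)
    then show ?thesis using even_both_if_even_sum_mult 2 by blast
  next
    case 3
    have "even (c + d + (e + f) + (a + b))" "c * d + e * f + a * b = 0"
      using sum im by (simp_all add: ac_simps)
    then show ?thesis using even_both_if_even_sum_mult 3 by blast
  qed
qed

lemma gauss_intsE:
  assumes "z \<in> gauss_ints"
  obtains a b :: int where "z = Complex (of_int a) (of_int b)"
proof -
  from assms obtain a b where "Re z = of_int a" "Im z = of_int b"
    unfolding gauss_ints_def by (auto elim!: Ints_cases)
  then show ?thesis using that[of a b] by (simp add: complex_eq_iff)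
qed

lemma Complex_of_int_in_gauss_ints: "Complex (of_int a) (of_int b) \<in> gauss_ints"
  unfolding gauss_ints_def by simp

lemma gauss_ints_mult: "x \<in> gauss_ints \<Longrightarrow> y \<in> gauss_ints \<Longrightarrow> x * y \<in> gauss_ints"
  unfolding gauss_ints_def by auto

lemma gdvd_trans: "gdvd a b \<Longrightarrow> gdvd b c \<Longrightarrow> gdvd a c"
  unfolding gdvd_def by (metis gauss_ints_mult mult.assoc)

lemma gdvd_mult_right: "gdvd a b \<Longrightarrow> c \<in> gauss_ints \<Longrightarrow> gdvd a (c * b)"
  unfolding gdvd_def by (metis gauss_ints_mult mult.left_commute)

lemma gdvd_one_plus_i_if_even:
  assumes "even (a + b)"
  shows "gdvd (1 + \<i>) (Complex (of_int a) (of_int b))"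
proof -
  obtain p where p: "a + b = 2 * p" using assms by blast
  have "Complex (of_int a) (of_int b) = (1 + \<i>) * Complex (of_int p) (of_int (b - p))"
    using p by (simp add: complex_eq_iff)
  then show ?thesis unfolding gdvd_def using Complex_of_int_in_gauss_ints by blast
qed

lemma gdvd_two_if_even:
  assumes "even a" and "even b"
  shows "gdvd 2 (Complex (of_int a) (of_int b))"
proof -
  obtain p q where "a = 2 * p" "b = 2 * q" using assms by blast
  then have "Complex (of_int a) (of_int b) = 2 * Complex (of_int p) (of_int q)"
    by (simp add: complex_eq_iff)
  then show ?thesis unfolding gdvd_def using Complex_of_int_in_gauss_ints by blast
qed

lemma gdvd_one_plus_i_squared_two: "gdvd ((1 + \<i>)^2) 2"
proof -
  have "2 = (1 + \<i>)^2 * Complex (of_int 0) (of_int (-1))"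
    by (simp add: complex_eq_iff power2_eq_square)
  then show ?thesis unfolding gdvd_def using Complex_of_int_in_gauss_ints by blast
qed

lemma one_plus_i_not_unit: "1 + \<i> \<notin> gunits"
  unfolding gunits_def by (auto simp: complex_eq_iff)

lemma gdvd_two_if_sum_squares_zero:
  assumes "x \<in> gauss_ints" and "y \<in> gauss_ints" and "z \<in> gauss_ints"
    and sum: "x^2 + y^2 + z^2 = 0"
    and not_all: "\<not> (gdvd (1 + \<i>) x \<and> gdvd (1 + \<i>) y \<and> gdvd (1 + \<i>) z)"
  shows "gdvd 2 x \<or> gdvd 2 y \<or> gdvd 2 z"
proof -
  obtain a b c d e f where
    x: "x = Complex (of_int a) (of_int b)" and y: "y = Complex (of_int c) (of_int d)" and
    z: "z = Complex (of_int e) (of_int f)"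
    using assms(1-3) by (metis gauss_intsE)
  have "real_of_int (a^2 - b^2 + (c^2 - d^2) + (e^2 - f^2)) = Re (x^2 + y^2 + z^2)"
    "real_of_int (2 * (a * b + c * d + e * f)) = Im (x^2 + y^2 + z^2)"
    unfolding x y z by (simp_all add: power2_eq_square algebra_simps)
  then have "a^2 - b^2 + (c^2 - d^2) + (e^2 - f^2) = 0" "a * b + c * d + e * f = 0"
    unfolding sum by (simp_all only: zero_complex.sel of_int_eq_0_iff) simp
  moreover have "odd (a + b) \<or> odd (c + d) \<or> odd (e + f)"
    using not_all gdvd_one_plus_i_if_even unfolding x y z by blast
  ultimately show ?thesis
    unfolding x y z by (metis even_pair_if_sum_squares_zero gdvd_two_if_even)
qed

theorem lemma4p1:
  fixes \<alpha> \<beta> \<gamma> :: complex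
  assumes "\<alpha> \<in> gauss_ints" and "\<beta> \<in> gauss_ints" and "\<gamma> \<in> gauss_ints"
    and "\<alpha>^2 + \<beta>^2 + \<gamma>^2 = 0"
    and "\<alpha> * \<beta> * \<gamma> \<noteq> 0"
    and "gcoprime3 \<alpha> \<beta> \<gamma>"
  shows "gdvd ((1 + \<i>)^2) (\<alpha> * \<beta> * \<gamma>)"
proof -
  have "1 + \<i> \<in> gauss_ints" unfolding gauss_ints_def by simp
  then have "\<not> (gdvd (1 + \<i>) \<alpha> \<and> gdvd (1 + \<i>) \<beta> \<and> gdvd (1 + \<i>) \<gamma>)"
    using assms(6) one_plus_i_not_unit unfolding gcoprime3_def by blast
  then have "gdvd 2 \<alpha> \<or> gdvd 2 \<beta> \<or> gdvd 2 \<gamma>"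
    using gdvd_two_if_sum_squares_zero assms(1-4) by blast
  then have "gdvd 2 (\<alpha> * \<beta> * \<gamma>)"
    using assms(1-3) gauss_ints_mult
    by (metis gdvd_mult_right mult.commute mult.left_commute)
  then show ?thesis using gdvd_one_plus_i_squared_two gdvd_trans by blast
qed

end
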